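(* Let $N,M,L,I$ be positive integers, $\sigma^2>0$, $\rho>0$. For $i\in\{1,\dots,I\}$ let $\hat\alpha_i\in\mathbb C$, $\hat{\mathbf G}_i\in\mathbb C^{N\times M}$, $\mathbf a_i\in\mathbb C^N$; for $1\le i<j\le I$ let $\beta_{i,j}\ge0$; and let $\mathbf x\in\mathbb C^M$, $\boldsymbol\theta\in\mathbb C^N$ be fixed. For $i,j\in\{1,\dots,I\}$ define $\mathbf A_{i,j}=(\hat{\mathbf G}_j^{*}\hat{\mathbf G}_i^{T})\odot(\mathbf a_i\mathbf a_j^H)^T$ and $\mathbf B_{i,j}=(\mathbf a_j^{*}\mathbf a_i^T)\odot(\hat{\mathbf G}_i\mathbf x\mathbf x^H\hat{\mathbf G}_j^H)^T$. For $\mathbf Q\in\mathbb C^{N\times N}$ let $$\varphi_{i,j}(\mathbf Q)=\frac{L}{\sigma^2}\Big(|\hat\alpha_i|^2\mathrm{tr}(\mathbf Q^H\mathbf A_{i,i}\mathbf Q\mathbf B_{i,i})-2\Re\{\hat\alpha_i\hat\alpha_j^{*}\mathrm{tr}(\mathbf Q^H\mathbf A_{i,j}\mathbf Q\mathbf B_{i,j})\}+|\hat\alpha_j|^2\mathrm{tr}(\mathbf Q^H\mathbf A_{j,j}\mathbf Q\mathbf B_{j,j})\Big),$$ $$\varpi(\mathbf Q)=\sum_{i=1}^{I}\sum_{j=i+1}^{I}\beta_{i,j}\varphi_{i,j}(\mathbf Q)+\frac{1}{2\rho}\Re\{\boldsymbol\theta^H\mathbf Q\boldsymbol\theta\},$$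 and let $\mathcal M=\{\mathbf Q\in\mathbb C^{N\times N}:|\mathbf Q(m,n)|=1\ \forall m,n\}$. Further define $$\mathbf D_{i,j}(\mathbf Q)=\frac{L}{\sigma^2}\Big(|\hat\alpha_i|^2\mathbf A_{i,i}\mathbf Q\mathbf B_{i,i}-\hat\alpha_i\hat\alpha_j^{*}\mathbf A_{i,j}\mathbf Q\mathbf B_{i,j}-\hat\alpha_i^{*}\hat\alpha_j\mathbf A_{i,j}^H\mathbf Q\mathbf B_{i,j}^H+|\hat\alpha_j|^2\mathbf A_{j,j}\mathbf Q\mathbf B_{j,j}\Big)$$ and, for $m,n\in\{1,\dots,N\}$, $$\chi_{i,j}^{(m,n)}=|\hat\alpha_i|^2\mathbf A_{i,i}(m,m)\mathbf B_{i,i}(n,n)-2\Re\{\hat\alpha_i\hat\alpha_j^{*}\mathbf A_{i,j}(m,m)\mathbf B_{i,j}(n,n)\}+|\hat\alpha_j|^2\mathbf A_{j,j}(m,m)\mathbf B_{j,j}(n,n).$$ Then, when the block coordinate descent method is applied to $\max_{\mathbf Q\in\mathcal M}\varpi(\mathbf Q)$ updating one entry at a time, the entry $(m,n)$ (for any $m,n$, with all other entries of $\mathbf Q\in\mathcal M$ fixed) is updated as $$\mathbf Q(m,n)\leftarrow\exp\Big\{j\arg\Big(\sum_{i<j}\beta_{i,j}[\mathbf D_{i,j}(\mathbf Q)]_{m,n}+\frac{1}{4\rho}[\boldsymbol\theta\boldsymbol\theta^H]_{m,n}-\frac{L}{\sigma^2}\mathbf Q(m,n)\sum_{i<j}\beta_{i,j}\chi_{i,j}^{(m,n)}\Big)\Big\},$$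 i.e. this value maximizes $\varpi$ over all matrices in $\mathcal M$ that coincide with $\mathbf Q$ outside the entry $(m,n)$ (with $\arg 0$ taken arbitrarily).
   Context: $\odot$ is the Hadamard product, $(\cdot)^*$ entrywise conjugate, $(\cdot)^H$ conjugate transpose, $j$ the imaginary unit (also used as an index), $\arg$ the argument of a complex number, $\sum_{i<j}$ denotes $\sum_{i=1}^I\sum_{j=i+1}^I$. $\mathbf D_{i,j}(\mathbf Q)$ is the Wirtinger derivative $\partial\varphi_{i,j}/\partial\mathbf Q^{*}$. *)

theory Defs
  imports "HOL-Analysis.Analysis"
begin

definition mconj :: "complex^'c^'r \<Rightarrow> complex^'c^'r" where
  "mconj A = (\<chi> i j. cnj (A$i$j))"

definition vconj :: "complex^'n \<Rightarrow> complex^'n" where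
  "vconj v = (\<chi> i. cnj (v$i))"

definition adj :: "complex^'c^'r \<Rightarrow> complex^'r^'c" where
  "adj A = transpose (mconj A)"

definition hadamard :: "complex^'c^'r \<Rightarrow> complex^'c^'r \<Rightarrow> complex^'c^'r" where
  "hadamard A B = (\<chi> i j. A$i$j * B$i$j)"

definition mscale :: "complex \<Rightarrow> complex^'c^'r \<Rightarrow> complex^'c^'r" where
  "mscale c A = (\<chi> i j. c * A$i$j)"

definition colrow :: "complex^'r \<Rightarrow> complex^'c \<Rightarrow> complex^'c^'r" where
  "colrow u v = (\<chi> i j. u$i * v$j)"

definition Amat :: "(nat \<Rightarrow> complex^'m^'n) \<Rightarrow> (nat \<Rightarrow> complex^'n) \<Rightarrow> nat \<Rightarrow> nat \<Rightarrow> complex^'n^'n" where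
  "Amat G a i j = hadamard (mconj (G j) ** transpose (G i)) (transpose (colrow (a i) (vconj (a j))))"

definition Bmat :: "(nat \<Rightarrow> complex^'m^'n) \<Rightarrow> (nat \<Rightarrow> complex^'n) \<Rightarrow> complex^'m \<Rightarrow> nat \<Rightarrow> nat \<Rightarrow> complex^'n^'n" where
  "Bmat G a x i j = hadamard (colrow (vconj (a j)) (a i))
      (transpose (G i ** colrow x (vconj x) ** adj (G j)))"

definition qform :: "complex^'n^'n \<Rightarrow> complex^'n^'n \<Rightarrow> complex^'n^'n \<Rightarrow> complex" where
  "qform Q A B = trace (adj Q ** A ** Q ** B)"

text \<open>\<phi>_{i,j}(Q). The traces tr(Q^H A_{i,i} Q B_{i,i}) are real (A_{i,i}, B_{i,i} Hermitian);
  we take their real part so that \<phi> is real-valued.\<close>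
definition phi :: "real \<Rightarrow> real \<Rightarrow> (nat \<Rightarrow> complex) \<Rightarrow> (nat \<Rightarrow> complex^'m^'n) \<Rightarrow> (nat \<Rightarrow> complex^'n)
    \<Rightarrow> complex^'m \<Rightarrow> nat \<Rightarrow> nat \<Rightarrow> complex^'n^'n \<Rightarrow> real" where
  "phi L \<sigma>2 \<alpha> G a x i j Q = L / \<sigma>2 *
     ( (cmod (\<alpha> i))\<^sup>2 * Re (qform Q (Amat G a i i) (Bmat G a x i i))
     - 2 * Re (\<alpha> i * cnj (\<alpha> j) * qform Q (Amat G a i j) (Bmat G a x i j))
     + (cmod (\<alpha> j))\<^sup>2 * Re (qform Q (Amat G a j j) (Bmat G a x j j)))"

definition varpi :: "real \<Rightarrow> real \<Rightarrow> real \<Rightarrow> nat \<Rightarrow> (nat \<Rightarrow> nat \<Rightarrow> real) \<Rightarrow> (nat \<Rightarrow> complex)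
    \<Rightarrow> (nat \<Rightarrow> complex^'m^'n) \<Rightarrow> (nat \<Rightarrow> complex^'n) \<Rightarrow> complex^'m \<Rightarrow> complex^'n
    \<Rightarrow> complex^'n^'n \<Rightarrow> real" where
  "varpi L \<sigma>2 \<rho> I \<beta> \<alpha> G a x \<theta> Q =
     (\<Sum>i\<in>{1..I}. \<Sum>j\<in>{i+1..I}. \<beta> i j * phi L \<sigma>2 \<alpha> G a x i j Q)
     + 1 / (2 * \<rho>) * Re (\<Sum>k\<in>UNIV. cnj (\<theta>$k) * (Q *v \<theta>)$k)"

definition unimod :: "(complex^'n^'n) set" where
  "unimod = {Q. \<forall>r s. cmod (Q$r$s) = 1}"

definition Dmat :: "real \<Rightarrow> real \<Rightarrow> (nat \<Rightarrow> complex) \<Rightarrow> (nat \<Rightarrow> complex^'m^'n) \<Rightarrow> (nat \<Rightarrow> complex^'n)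
    \<Rightarrow> complex^'m \<Rightarrow> nat \<Rightarrow> nat \<Rightarrow> complex^'n^'n \<Rightarrow> complex^'n^'n" where
  "Dmat L \<sigma>2 \<alpha> G a x i j Q = mscale (complex_of_real (L / \<sigma>2))
     ( (mscale (complex_of_real ((cmod (\<alpha> i))\<^sup>2)) (Amat G a i i ** Q ** Bmat G a x i i))
     - (mscale (\<alpha> i * cnj (\<alpha> j)) (Amat G a i j ** Q ** Bmat G a x i j))
     - (mscale (cnj (\<alpha> i) * \<alpha> j) (adj (Amat G a i j) ** Q ** adj (Bmat G a x i j)))
     + (mscale (complex_of_real ((cmod (\<alpha> j))\<^sup>2)) (Amat G a j j ** Q ** Bmat G a x j j)))"

definition chi :: "(nat \<Rightarrow> complex) \<Rightarrow> (nat \<Rightarrow> complex^'m^'n) \<Rightarrow> (nat \<Rightarrow> complex^'n)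
    \<Rightarrow> complex^'m \<Rightarrow> nat \<Rightarrow> nat \<Rightarrow> 'n \<Rightarrow> 'n \<Rightarrow> complex" where
  "chi \<alpha> G a x i j m n =
       complex_of_real ((cmod (\<alpha> i))\<^sup>2) * (Amat G a i i)$m$m * (Bmat G a x i i)$n$n
     - complex_of_real (2 * Re (\<alpha> i * cnj (\<alpha> j) * (Amat G a i j)$m$m * (Bmat G a x i j)$n$n))
     + complex_of_real ((cmod (\<alpha> j))\<^sup>2) * (Amat G a j j)$m$m * (Bmat G a x j j)$n$n"

end

theory Submission
  imports Defs
begin

(* Fix every entry of Q except z = Q(m,n). Then the real part of each trace tr(Q^H A Q B),
   hence each \<phi>_{i,j} and \<varpi>, is a real quadratic K + Re(conj z w) + k |z|^2 in z, whose
   linear coefficient w is twice the Wirtinger derivative at the matrix with entry (m,n) set to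
   zero. That derivative is the D-term of the update rule with the contribution of the old entry,
   Q(m,n) times the \<chi>-term, removed. On the unit circle |z|^2 = 1, so \<varpi> is maximal when z
   is aligned with w, that is z = exp(j arg w). No sign conditions on \<beta>, \<rho>, L or \<sigma>^2
   are needed. *)

definition herm_quadratic :: "(complex \<Rightarrow> real) \<Rightarrow> complex \<Rightarrow> bool" where
  "herm_quadratic f w \<longleftrightarrow> (\<exists>K k. \<forall>z. f z = K + Re (cnj z * w) + k * (cmod z)\<^sup>2)"

lemma herm_quadratic_intro:
  "(\<And>z. f z = K + Re (cnj z * w) + k * (cmod z)\<^sup>2) \<Longrightarrow> herm_quadratic f w"
  unfolding herm_quadratic_def by blast

lemma herm_quadratic_zero: "herm_quadratic (\<lambda>_. 0) 0"
  by (rule herm_quadratic_intro[where K = 0 and k = 0]) simp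

lemma herm_quadratic_add:
  assumes "herm_quadratic f v" and "herm_quadratic g w"
  shows "herm_quadratic (\<lambda>z. f z + g z) (v + w)"
proof -
  obtain K k K' k' where "\<And>z. f z = K + Re (cnj z * v) + k * (cmod z)\<^sup>2"
    and "\<And>z. g z = K' + Re (cnj z * w) + k' * (cmod z)\<^sup>2"
    using assms unfolding herm_quadratic_def by blast
  then show ?thesis
    by (intro herm_quadratic_intro[where K = "K + K'" and k = "k + k'"]) (simp add: algebra_simps)
qed

lemma herm_quadratic_scale:
  assumes "herm_quadratic f w"
  shows "herm_quadratic (\<lambda>z. r * f z) (of_real r * w)"
proof -
  obtain K k where "\<And>z. f z = K + Re (cnj z * w) + k * (cmod z)\<^sup>2"
    using assms unfolding herm_quadratic_def by blast
  then show ?thesis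
    by (intro herm_quadratic_intro[where K = "r * K" and k = "r * k"]) (simp add: algebra_simps)
qed

lemma herm_quadratic_diff:
  assumes "herm_quadratic f v" and "herm_quadratic g w"
  shows "herm_quadratic (\<lambda>z. f z - g z) (v - w)"
  using herm_quadratic_add[OF assms(1) herm_quadratic_scale[OF assms(2), of "-1"]] by simp

lemma herm_quadratic_sum:
  assumes "finite S" and "\<And>i. i \<in> S \<Longrightarrow> herm_quadratic (f i) (w i)"
  shows "herm_quadratic (\<lambda>z. \<Sum>i\<in>S. f i z) (\<Sum>i\<in>S. w i)"
  using assms by (induction S rule: finite_induct) (simp_all add: herm_quadratic_zero herm_quadratic_add)

lemma herm_quadratic_max_on_circle:
  assumes "herm_quadratic f w" and "cmod z = 1" and "cmod q = 1" and "Re (cnj q * w) = cmod w"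
  shows "f z \<le> f q"
proof -
  obtain K k where f: "\<And>z. f z = K + Re (cnj z * w) + k * (cmod z)\<^sup>2"
    using assms(1) unfolding herm_quadratic_def by blast
  have "Re (cnj z * w) \<le> cmod (cnj z * w)" by (rule complex_Re_le_cmod)
  also have "\<dots> = cmod w" using assms(2) by (simp add: norm_mult)
  finally show ?thesis using assms(2-4) by (simp add: f)
qed

lemma Re_cnj_exp_Arg_mult: "Re (cnj (exp (\<i> * of_real (Arg w))) * w) = cmod w"
proof (cases "w = 0")
  case False
  have "cnj (exp (\<i> * of_real (Arg w))) * w
      = of_real (cmod w) * (exp (\<i> * of_real (Arg w)) * exp (- (\<i> * of_real (Arg w))))"
    by (subst Arg_eq[OF False]) (simp add: exp_cnj mult_ac)
  also have "\<dots> = of_real (cmod w)" by (simp add: exp_minus_inverse)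
  finally show ?thesis by simp
qed simp

definition upd_entry :: "'a^'c^'r \<Rightarrow> 'r \<Rightarrow> 'c \<Rightarrow> 'a \<Rightarrow> 'a^'c^'r" where
  "upd_entry Q m n z = (\<chi> r s. if r = m \<and> s = n then z else Q$r$s)"

definition elem_matrix :: "'r \<Rightarrow> 'c \<Rightarrow> 'a::zero_neq_one^'c^'r" where
  "elem_matrix m n = (\<chi> r s. if r = m \<and> s = n then 1 else 0)"

lemma upd_entry_same: "upd_entry Q m n (Q$m$n) = Q"
  by (simp add: vec_eq_iff upd_entry_def)

lemma upd_entry_eqI:
  assumes "\<And>r s. (r, s) \<noteq> (m, n) \<Longrightarrow> Q'$r$s = Q$r$s"
  shows "Q' = upd_entry Q m n (Q'$m$n)"
  using assms by (auto simp: vec_eq_iff upd_entry_def)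

lemma upd_entry_unimod: "Q \<in> unimod \<Longrightarrow> cmod z = 1 \<Longrightarrow> upd_entry Q m n z \<in> unimod"
  by (simp add: unimod_def upd_entry_def)

lemma adj_nth [simp]: "adj A $ i $ j = cnj (A$j$i)"
  by (simp add: adj_def mconj_def transpose_def)

lemma mscale_nth [simp]: "mscale c A $ i $ j = c * A$i$j"
  by (simp add: mscale_def)

lemma upd_entry_decomp: "upd_entry Q m n z = upd_entry Q m n 0 + mscale z (elem_matrix m n)"
  by (simp add: vec_eq_iff upd_entry_def elem_matrix_def)

lemma matrix_add_rdistrib: "(B + C) ** A = B ** A + C ** A"
  by (simp add: vec_eq_iff matrix_matrix_mult_def sum.distrib[symmetric] distrib_right)

lemma adj_add: "adj (X + Y) = adj X + adj Y"
  by (simp add: vec_eq_iff)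

lemma adj_mscale: "adj (mscale c X) = mscale (cnj c) (adj X)"
  by (simp add: vec_eq_iff)

lemma adj_adj [simp]: "adj (adj X) = X"
  by (simp add: vec_eq_iff)

lemma adj_mult: "adj (X ** Y) = adj Y ** adj X"
  by (simp add: vec_eq_iff matrix_matrix_mult_def mult.commute)

lemma mscale_mult_left: "mscale c X ** Y = mscale c (X ** Y)"
  by (simp add: vec_eq_iff matrix_matrix_mult_def sum_distrib_left mult.assoc)

lemma mscale_mult_right: "X ** mscale c Y = mscale c (X ** Y)"
  by (simp add: vec_eq_iff matrix_matrix_mult_def sum_distrib_left algebra_simps)

lemma trace_mscale: "trace (mscale c X) = c * trace X"
  by (simp add: trace_def sum_distrib_left)

lemma sum_delta_conj:
  "(\<Sum>k\<in>UNIV. if k = (m::'n::finite) \<and> P then c else 0) = (if P then c else 0)"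
  by (cases P) (simp_all add: sum.delta)

lemma mult_elem_matrix_mult_nth: "(X ** elem_matrix m n ** Y)$i$j = X$i$m * Y$n$j"
  by (simp add: matrix_matrix_mult_def elem_matrix_def if_distrib if_distribR sum_delta_conj
      cong: if_cong)

lemma trace_adj_elem_matrix_mult: "trace (adj (elem_matrix m n) ** X) = X$m$n"
  by (simp add: trace_def matrix_matrix_mult_def elem_matrix_def if_distrib if_distribR sum_delta_conj
      cong: if_cong)

lemma trace_mult_elem_matrix_mult:
  fixes X Y :: "'a::comm_ring_1^'n::finite^'n"
  shows "trace (X ** elem_matrix m n ** Y) = (Y ** X)$n$m"
  unfolding trace_def mult_elem_matrix_mult_nth by (simp add: matrix_matrix_mult_def mult.commute)

lemma mult_upd_entry_mult_nth:
  fixes Q X Y :: "complex^'n::finite^'n"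
  shows "(X ** upd_entry Q m n z ** Y)$i$j = (X ** upd_entry Q m n 0 ** Y)$i$j + X$i$m * z * Y$n$j"
proof -
  have "X ** upd_entry Q m n z ** Y = X ** upd_entry Q m n 0 ** Y + mscale z (X ** elem_matrix m n ** Y)"
    by (subst upd_entry_decomp)
      (simp add: matrix_add_ldistrib matrix_add_rdistrib mscale_mult_left mscale_mult_right)
  then show ?thesis by (simp add: mult_elem_matrix_mult_nth mult_ac)
qed

lemma qform_upd_entry:
  fixes Q A B :: "complex^'n::finite^'n" and m n :: 'n
  defines "Q0 \<equiv> upd_entry Q m n 0"
  shows "qform (upd_entry Q m n z) A B = qform Q0 A B + cnj z * (A ** Q0 ** B)$m$n
     + z * (B ** adj Q0 ** A)$n$m + cnj z * z * (A$m$m * B$n$n)"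
proof -
  let ?E = "elem_matrix m n :: complex^'n^'n"
  have "trace (adj Q0 ** A ** mscale z ?E ** B) = z * (B ** adj Q0 ** A)$n$m"
    by (simp add: mscale_mult_left mscale_mult_right trace_mscale trace_mult_elem_matrix_mult
        matrix_mul_assoc)
  moreover have "trace (mscale (cnj z) (adj ?E) ** A ** Q0 ** B) = cnj z * (A ** Q0 ** B)$m$n"
    by (simp add: mscale_mult_left trace_mscale trace_adj_elem_matrix_mult flip: matrix_mul_assoc)
  moreover have "trace (mscale (cnj z) (adj ?E) ** A ** mscale z ?E ** B) = cnj z * z * (A$m$m * B$n$n)"
    by (simp add: mscale_mult_left mscale_mult_right trace_mscale trace_adj_elem_matrix_mult
        flip: matrix_mul_assoc) (simp add: matrix_mul_assoc mult_elem_matrix_mult_nth)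
  ultimately show ?thesis
    unfolding qform_def Q0_def upd_entry_decomp[of Q m n z] adj_add adj_mscale
      matrix_add_rdistrib matrix_add_ldistrib trace_add
    by (simp add: algebra_simps)
qed

lemma herm_quadratic_Re_qform:
  fixes Q A B :: "complex^'n::finite^'n" and m n :: 'n
  defines "Q0 \<equiv> upd_entry Q m n 0"
  shows "herm_quadratic (\<lambda>z. Re (g * qform (upd_entry Q m n z) A B))
           (g * (A ** Q0 ** B)$m$n + cnj g * (adj A ** Q0 ** adj B)$m$n)"
proof -
  have "adj (B ** adj Q0 ** A) = adj A ** Q0 ** adj B"
    by (simp add: adj_mult matrix_mul_assoc)
  then have "cnj ((B ** adj Q0 ** A)$n$m) = (adj A ** Q0 ** adj B)$m$n"
    by (metis adj_nth)
  then have "Re (g * (z * (B ** adj Q0 ** A)$n$m)) = Re (cnj z * (cnj g * (adj A ** Q0 ** adj B)$m$n))" for z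
    by (metis complex_cnj_cnj complex_cnj_mult cnj.sel(1) mult.left_commute)
  moreover have "cnj z * z = of_real ((cmod z)\<^sup>2)" for z
    using complex_norm_square[of z] by (simp add: mult.commute)
  ultimately show ?thesis
    by (intro herm_quadratic_intro[where K = "Re (g * qform Q0 A B)" and k = "Re (g * (A$m$m * B$n$n))"])
      (simp add: qform_upd_entry[of Q m n, folded Q0_def] algebra_simps)
qed

lemma herm_quadratic_Re_qform_hermitian:
  fixes Q A B :: "complex^'n::finite^'n" and m n :: 'n
  assumes "adj A = A" and "adj B = B"
  shows "herm_quadratic (\<lambda>z. Re (qform (upd_entry Q m n z) A B)) (2 * (A ** upd_entry Q m n 0 ** B)$m$n)"
  using herm_quadratic_Re_qform[of 1 Q m n A B] by (simp add: assms)

lemma Amat_hermitian: "adj (Amat G a i i) = Amat G a i i"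
  by (simp add: vec_eq_iff Amat_def hadamard_def mconj_def transpose_def colrow_def vconj_def
      matrix_matrix_mult_def mult.commute)

lemma Bmat_hermitian: "adj (Bmat G a x i i) = Bmat G a x i i"
proof -
  let ?M = "G i ** colrow x (vconj x) ** adj (G i)"
  have "adj (colrow x (vconj x)) = colrow x (vconj x)"
    by (simp add: vec_eq_iff colrow_def vconj_def mult.commute)
  then have "adj ?M = ?M" by (simp add: adj_mult matrix_mul_assoc)
  then have "cnj (?M$r$s) = ?M$s$r" for r s
    by (metis adj_nth)
  then show ?thesis
    by (simp add: vec_eq_iff Bmat_def hadamard_def transpose_def colrow_def vconj_def mult.commute)
qed

lemma Dmat_upd_entry_zero_nth:
  "Dmat L s \<alpha> G a x i j (upd_entry Q m n 0) $m$n
     = Dmat L s \<alpha> G a x i j Q $m$n - of_real (L / s) * Q$m$n * chi \<alpha> G a x i j m n"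
proof -
  have entry: "(X ** Q ** Y)$m$n = (X ** upd_entry Q m n 0 ** Y)$m$n + X$m$m * Q$m$n * Y$n$n" for X Y
    using mult_upd_entry_mult_nth[of X Q m n "Q$m$n" Y m n] by (simp add: upd_entry_same)
  let ?w = "\<alpha> i * cnj (\<alpha> j) * (Amat G a i j)$m$m * (Bmat G a x i j)$n$n"
  have chi_eq: "chi \<alpha> G a x i j m n =
       of_real ((cmod (\<alpha> i))\<^sup>2) * (Amat G a i i)$m$m * (Bmat G a x i i)$n$n - (?w + cnj ?w)
     + of_real ((cmod (\<alpha> j))\<^sup>2) * (Amat G a j j)$m$m * (Bmat G a x j j)$n$n"
    unfolding chi_def complex_add_cnj ..
  show ?thesis
    unfolding Dmat_def chi_eq by (simp add: entry algebra_simps)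
qed

lemma herm_quadratic_phi:
  fixes Q :: "complex^'n::finite^'n" and m n :: 'n
  shows "herm_quadratic (\<lambda>z. phi L s \<alpha> G a x i j (upd_entry Q m n z))
           (2 * Dmat L s \<alpha> G a x i j (upd_entry Q m n 0) $m$n)"
proof -
  define Q0 where "Q0 = upd_entry Q m n 0"
  define g where "g = \<alpha> i * cnj (\<alpha> j)"
  let ?Q = "upd_entry Q m n"
  let ?A = "Amat G a" and ?B = "Bmat G a x"
  have "herm_quadratic
      (\<lambda>z. L / s * ((cmod (\<alpha> i))\<^sup>2 * Re (qform (?Q z) (?A i i) (?B i i))
        - 2 * Re (g * qform (?Q z) (?A i j) (?B i j)) + (cmod (\<alpha> j))\<^sup>2 * Re (qform (?Q z) (?A j j) (?B j j))))
      (of_real (L / s) * (of_real ((cmod (\<alpha> i))\<^sup>2) * (2 * (?A i i ** Q0 ** ?B i i)$m$n)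
        - of_real 2 * (g * (?A i j ** Q0 ** ?B i j)$m$n + cnj g * (adj (?A i j) ** Q0 ** adj (?B i j))$m$n)
        + of_real ((cmod (\<alpha> j))\<^sup>2) * (2 * (?A j j ** Q0 ** ?B j j)$m$n)))"
    unfolding Q0_def
    by (intro herm_quadratic_scale herm_quadratic_add herm_quadratic_diff herm_quadratic_Re_qform
        herm_quadratic_Re_qform_hermitian Amat_hermitian Bmat_hermitian)
  then show ?thesis
    unfolding phi_def Dmat_def Q0_def g_def by (simp add: algebra_simps)
qed

lemma herm_quadratic_Re_sesquilinear:
  fixes Q :: "complex^'n::finite^'n" and m n :: 'n
  shows "herm_quadratic (\<lambda>z. Re (\<Sum>k\<in>UNIV. cnj (\<theta>$k) * (upd_entry Q m n z *v \<theta>)$k))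
           ((colrow \<theta> (vconj \<theta>))$m$n)"
proof -
  let ?f = "\<lambda>z. \<Sum>k\<in>UNIV. cnj (\<theta>$k) * (upd_entry Q m n z *v \<theta>)$k"
  have E: "(mscale z (elem_matrix m n) *v \<theta>)$k = (if k = m then z * \<theta>$n else 0)" for z k
    by (simp add: matrix_vector_mult_def elem_matrix_def if_distrib if_distribR sum_delta_conj
        cong: if_cong)
  have sum_E: "(\<Sum>k\<in>UNIV. cnj (\<theta>$k) * (mscale z (elem_matrix m n) *v \<theta>)$k) = cnj (\<theta>$m) * (z * \<theta>$n)"
    for z unfolding E by (simp add: if_distrib cong: if_cong)
  have f: "?f z = ?f 0 + cnj (\<theta>$m) * (z * \<theta>$n)" for z
    by (subst upd_entry_decomp)
      (simp only: matrix_vector_mult_add_rdistrib vector_add_component distrib_left sum.distrib sum_E)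
  have "Re (cnj (\<theta>$m) * (z * \<theta>$n)) = Re (cnj z * (colrow \<theta> (vconj \<theta>))$m$n)" for z
    by (simp add: colrow_def vconj_def algebra_simps)
  then have "Re (?f z) = Re (?f 0) + Re (cnj z * (colrow \<theta> (vconj \<theta>))$m$n) + 0 * (cmod z)\<^sup>2" for z
    by (simp only: f[of z] plus_complex.sel mult_zero_left add_0_right)
  then show ?thesis
    by (rule herm_quadratic_intro)
qed

lemma herm_quadratic_varpi:
  fixes Q :: "complex^'n::finite^'n" and m n :: 'n
  shows "herm_quadratic (\<lambda>z. varpi L s \<rho> I \<beta> \<alpha> G a x \<theta> (upd_entry Q m n z))
    (2 * ((\<Sum>i\<in>{1..I}. \<Sum>j\<in>{i+1..I}. of_real (\<beta> i j) * (Dmat L s \<alpha> G a x i j Q)$m$n)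
          + of_real (1 / (4 * \<rho>)) * (colrow \<theta> (vconj \<theta>))$m$n
          - of_real (L / s) * Q$m$n
              * (\<Sum>i\<in>{1..I}. \<Sum>j\<in>{i+1..I}. of_real (\<beta> i j) * chi \<alpha> G a x i j m n)))"
proof -
  have "herm_quadratic (\<lambda>z. varpi L s \<rho> I \<beta> \<alpha> G a x \<theta> (upd_entry Q m n z))
    ((\<Sum>i\<in>{1..I}. \<Sum>j\<in>{i+1..I}. of_real (\<beta> i j) * (2 * Dmat L s \<alpha> G a x i j (upd_entry Q m n 0) $m$n))
      + of_real (1 / (2 * \<rho>)) * (colrow \<theta> (vconj \<theta>))$m$n)"
    unfolding varpi_def
    by (intro herm_quadratic_add herm_quadratic_sum herm_quadratic_scale herm_quadratic_phi
        herm_quadratic_Re_sesquilinear finite_atLeastAtMost)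
  then show ?thesis
    unfolding Dmat_upd_entry_zero_nth
    by (simp add: algebra_simps sum_subtractf sum_distrib_left sum.distrib)
qed

theorem proposition4:
  fixes L I :: nat and \<sigma>2 \<rho> :: real
    and \<alpha> :: "nat \<Rightarrow> complex" and G :: "nat \<Rightarrow> complex^'m::finite^'n::finite"
    and a :: "nat \<Rightarrow> complex^'n" and \<beta> :: "nat \<Rightarrow> nat \<Rightarrow> real"
    and x :: "complex^'m" and \<theta> :: "complex^'n"
    and Q :: "complex^'n^'n" and m n :: 'n and t :: real
  assumes "L > 0" and "I > 0" and "\<sigma>2 > 0" and "\<rho> > 0"
    and "\<And>i j. 1 \<le> i \<Longrightarrow> i < j \<Longrightarrow> j \<le> I \<Longrightarrow> \<beta> i j \<ge> 0"
    and "Q \<in> unimod"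
  shows "let c = (\<Sum>i\<in>{1..I}. \<Sum>j\<in>{i+1..I}. complex_of_real (\<beta> i j) * (Dmat (real L) \<sigma>2 \<alpha> G a x i j Q)$m$n)
                 + complex_of_real (1 / (4 * \<rho>)) * (colrow \<theta> (vconj \<theta>))$m$n
                 - complex_of_real (real L / \<sigma>2) * Q$m$n
                     * (\<Sum>i\<in>{1..I}. \<Sum>j\<in>{i+1..I}. complex_of_real (\<beta> i j) * chi \<alpha> G a x i j m n);
             q = exp (\<i> * complex_of_real (if c = 0 then t else Arg c));
             Q1 = (\<chi> r s. if r = m \<and> s = n then q else Q$r$s)
         in Q1 \<in> unimod \<and>
            (\<forall>Q'\<in>unimod. (\<forall>r s. (r, s) \<noteq> (m, n) \<longrightarrow> Q'$r$s = Q$r$s) \<longrightarrow>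
               varpi (real L) \<sigma>2 \<rho> I \<beta> \<alpha> G a x \<theta> Q' \<le> varpi (real L) \<sigma>2 \<rho> I \<beta> \<alpha> G a x \<theta> Q1)"
proof -
  define c where "c = (\<Sum>i\<in>{1..I}. \<Sum>j\<in>{i+1..I}. complex_of_real (\<beta> i j) * (Dmat (real L) \<sigma>2 \<alpha> G a x i j Q)$m$n)
                 + complex_of_real (1 / (4 * \<rho>)) * (colrow \<theta> (vconj \<theta>))$m$n
                 - complex_of_real (real L / \<sigma>2) * Q$m$n
                     * (\<Sum>i\<in>{1..I}. \<Sum>j\<in>{i+1..I}. complex_of_real (\<beta> i j) * chi \<alpha> G a x i j m n)"
  define q where "q = exp (\<i> * complex_of_real (if c = 0 then t else Arg c))"
  let ?V = "varpi (real L) \<sigma>2 \<rho> I \<beta> \<alpha> G a x \<theta>"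
  have quadratic: "herm_quadratic (\<lambda>z. ?V (upd_entry Q m n z)) (2 * c)"
    unfolding c_def by (rule herm_quadratic_varpi)
  have q_unit: "cmod q = 1"
    unfolding q_def by (rule norm_exp_i_times)
  have q_aligned: "Re (cnj q * (2 * c)) = cmod (2 * c)"
    using Re_cnj_exp_Arg_mult[of c] by (cases "c = 0") (simp_all add: q_def mult.left_commute[of _ 2] norm_mult)
  have "?V Q' \<le> ?V (upd_entry Q m n q)"
    if "Q' \<in> unimod" and "\<forall>r s. (r, s) \<noteq> (m, n) \<longrightarrow> Q'$r$s = Q$r$s" for Q'
  proof -
    have "Q' = upd_entry Q m n (Q'$m$n)" using that(2) by (intro upd_entry_eqI) blast
    moreover have "cmod (Q'$m$n) = 1" using that(1) by (simp add: unimod_def)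
    ultimately show ?thesis
      using herm_quadratic_max_on_circle[OF quadratic _ q_unit q_aligned] by metis
  qed
  moreover have "upd_entry Q m n q \<in> unimod"
    using assms(6) q_unit by (rule upd_entry_unimod)
  ultimately show ?thesis
    unfolding Let_def c_def[symmetric] q_def[symmetric] upd_entry_def[symmetric] by blast
qed

end
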